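(* Define $\phi:\mathrm{PSL}(2,\mathbb{Z})\to\mathbb{C}$ by $\phi(\gamma)=(\mathcal{R}(\gamma;z_q)+2\lambda^2)\,f(\gamma z_q)$, where $f(w)=\frac{i(w-z_q)}{w-\overline{z_q}}$. Then every point in the image of $\phi$ has exactly $|\mathrm{Stab}_{\mathrm{PSL}(2,\mathbb{Z})}(z_q)|$ preimages, and this number equals $\frac12|\mathcal{O}_K^\times|$.
   Context: Let $q\in\{3,4,7,8,11,19,43,67,163\}$, $K$ the imaginary quadratic field of discriminant $-q$ (class number one), $\mathcal{O}_K$ its ring of integers, $\mathcal{O}_K^\times$ its unit group. Let $z_q=\mu+i\lambda$ with $\mu=0$ if $q\in\{4,8\}$, $\mu=1/2$ otherwise, $\lambda=\sqrt{q}/2$. $\mathbb{H}$ is the upper half-plane with hyperbolic distance $\rho$, $\cosh\rho(z,w)=1+\frac{|z-w|^2}{2\,\mathrm{Im}(z)\mathrm{Im}(w)}$, and $\mathrm{PSL}(2,\mathbb{Z})$ acts by Möbius transformations; $\mathcal{R}(\gamma;z_q)=2\lambda^2\cosh\rho(z_q,\gamma z_q)$. *)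

theory Defs
  imports "HOL-Analysis.Analysis" "HOL-Computational_Algebra.Polynomial"
begin

type_synonym mat2 = "int \<times> int \<times> int \<times> int"   (* (a,b,c,d) = [[a,b],[c,d]] *)

definition SL2Z :: "mat2 set" where
  "SL2Z = {(a,b,c,d). a*d - b*c = 1}"

definition mneg :: "mat2 \<Rightarrow> mat2" where
  "mneg M = (case M of (a,b,c,d) \<Rightarrow> (-a,-b,-c,-d))"

definition PSL2Z :: "mat2 set set" where
  "PSL2Z = {{M, mneg M} | M. M \<in> SL2Z}"

definition moeb :: "mat2 \<Rightarrow> complex \<Rightarrow> complex" where
  "moeb M z = (case M of (a,b,c,d) \<Rightarrow> (of_int a * z + of_int b) / (of_int c * z + of_int d))"

text \<open>Moebius action of a PSL(2,Z) element (independent of the representative).\<close>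
definition act :: "mat2 set \<Rightarrow> complex \<Rightarrow> complex" where
  "act g z = moeb (SOME M. M \<in> g) z"

definition cosh_rho :: "complex \<Rightarrow> complex \<Rightarrow> real" where
  "cosh_rho z w = 1 + (cmod (z - w))\<^sup>2 / (2 * Im z * Im w)"

definition mu :: "nat \<Rightarrow> real" where
  "mu q = (if q \<in> {4, 8} then 0 else 1/2)"

definition lam :: "nat \<Rightarrow> real" where
  "lam q = sqrt (real q) / 2"

definition zq :: "nat \<Rightarrow> complex" where
  "zq q = Complex (mu q) (lam q)"

definition RR :: "nat \<Rightarrow> mat2 set \<Rightarrow> real" where
  "RR q g = 2 * (lam q)\<^sup>2 * cosh_rho (zq q) (act g (zq q))"

definition stab :: "nat \<Rightarrow> mat2 set set" where
  "stab q = {g \<in> PSL2Z. act g (zq q) = zq q}"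

definition Kfield :: "nat \<Rightarrow> complex set" where
  "Kfield q = {of_real (of_rat r) + of_real (of_rat s) * \<i> * of_real (sqrt (real q)) | r s. True}"

definition algebraic_integer :: "complex \<Rightarrow> bool" where
  "algebraic_integer x \<longleftrightarrow> (\<exists>p :: int poly. lead_coeff p = 1 \<and> poly (map_poly of_int p) x = 0)"

definition OK :: "nat \<Rightarrow> complex set" where
  "OK q = {x \<in> Kfield q. algebraic_integer x}"

definition OK_units :: "nat \<Rightarrow> complex set" where
  "OK_units q = {x \<in> OK q. \<exists>y \<in> OK q. x * y = 1}"

end

theory Submission
  imports Defs
begin

text \<open>
  The value \<open>\<phi> g\<close> depends only on \<open>w = g z\<^sub>q\<close>, and \<open>w \<mapsto> (\<R> + 2\<lambda>\<^sup>2) f(w)\<close> is injective on the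
  upper half-plane: its real part determines the slope \<open>(Re w - \<mu>) / Im w\<close>, and along that ray
  its imaginary part is strictly increasing in \<open>Im w\<close>. Hence the fibres of \<open>\<phi>\<close> are the cosets
  of the stabiliser.

  Write \<open>z\<^sub>q = (e + \<surd>-q) / 2\<close> with \<open>e \<in> {0, 1}\<close>. A matrix fixing \<open>z\<^sub>q\<close> has \<open>c z\<^sub>q + d\<close> as an
  eigenvalue, and \<open>c z\<^sub>q + d = (n + t \<surd>-q) / 2\<close> with \<open>n = a + d\<close>, \<open>t = c\<close>; this sets up a bijection
  between such matrices and the integer solutions of \<open>n\<^sup>2 + q t\<^sup>2 = 4\<close>. The same solutions
  parametrise the units of \<open>\<O>\<^sub>K\<close>: a unit has modulus one and integral trace, because all powers
  of an algebraic integer of \<open>K\<close> lie in one fractional lattice, and for the listed \<open>q\<close> the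
  coordinate \<open>t\<close> is then integral as well. Since \<open>M\<close> and \<open>-M\<close> give the same element of
  \<open>PSL(2,\<int>)\<close>, \<open>2 |Stab(z\<^sub>q)| = |\<O>\<^sub>K\<^sup>\<times>|\<close>.
\<close>

section \<open>\<open>PSL(2,\<int>)\<close> acting on the upper half-plane\<close>

definition pm_class :: "mat2 \<Rightarrow> mat2 set" where
  "pm_class M = {M, mneg M}"

definition mmult :: "mat2 \<Rightarrow> mat2 \<Rightarrow> mat2" where
  "mmult M N = (case M of (a,b,c,d) \<Rightarrow> case N of (e,f,g,h) \<Rightarrow>
      (a*e + b*g, a*f + b*h, c*e + d*g, c*f + d*h))"

definition madj :: "mat2 \<Rightarrow> mat2" where
  "madj M = (case M of (a,b,c,d) \<Rightarrow> (d,-b,-c,a))"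

definition lmult :: "mat2 \<Rightarrow> mat2 set \<Rightarrow> mat2 set" where
  "lmult N g = mmult N ` g"

lemma mneg_eq [simp]: "mneg (a,b,c,d) = (-a,-b,-c,-d)"
  by (simp add: mneg_def)

lemma mmult_eq [simp]: "mmult (a,b,c,d) (e,f,g,h) = (a*e + b*g, a*f + b*h, c*e + d*g, c*f + d*h)"
  by (simp add: mmult_def)

lemma madj_eq [simp]: "madj (a,b,c,d) = (d,-b,-c,a)"
  by (simp add: madj_def)

lemma moeb_eq [simp]: "moeb (a,b,c,d) z = (of_int a * z + of_int b) / (of_int c * z + of_int d)"
  by (simp add: moeb_def)

lemma SL2Z_iff [simp]: "(a,b,c,d) \<in> SL2Z \<longleftrightarrow> a*d - b*c = 1"
  by (simp add: SL2Z_def)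

lemma mneg_neq: "M \<in> SL2Z \<Longrightarrow> mneg M \<noteq> M"
  by (cases M) auto

lemma SL2Z_mneg: "M \<in> SL2Z \<Longrightarrow> mneg M \<in> SL2Z"
  by (cases M) auto

lemma mmult_mneg_right: "mmult M (mneg N) = mneg (mmult M N)"
  by (cases M, cases N) auto

lemma mmult_assoc: "mmult M (mmult N P) = mmult (mmult M N) P"
  by (cases M, cases N, cases P) (simp add: algebra_simps)

lemma SL2Z_mmult: "M \<in> SL2Z \<Longrightarrow> N \<in> SL2Z \<Longrightarrow> mmult M N \<in> SL2Z"
proof (cases M, cases N)
  fix a b c d e f g h
  assume "M \<in> SL2Z" "N \<in> SL2Z" "M = (a,b,c,d)" "N = (e,f,g,h)"
  moreover have "(a*e + b*g)*(c*f + d*h) - (a*f + b*h)*(c*e + d*g) = (a*d - b*c)*(e*h - f*g)"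
    by (simp add: algebra_simps)
  ultimately show ?thesis by simp
qed

lemma SL2Z_madj: "M \<in> SL2Z \<Longrightarrow> madj M \<in> SL2Z"
  by (cases M) (auto simp: algebra_simps)

lemma mmult_madj: "M \<in> SL2Z \<Longrightarrow> mmult M (madj M) = (1,0,0,1)"
  by (cases M) (auto simp: algebra_simps)

lemma madj_mmult: "M \<in> SL2Z \<Longrightarrow> mmult (madj M) M = (1,0,0,1)"
  by (cases M) (auto simp: algebra_simps)

lemma mmult_one_left [simp]: "mmult (1,0,0,1) M = M"
  by (cases M) auto

lemma moeb_mneg: "moeb (mneg M) z = moeb M z"
proof (cases M)
  fix a b c d
  assume M: "M = (a,b,c,d)"
  have "(of_int (-a) * z + of_int (-b)) / (of_int (-c) * z + of_int (-d))
      = (- (of_int a * z + of_int b)) / (- (of_int c * z + of_int d))"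
    by simp
  then show ?thesis
    by (simp only: M mneg_eq moeb_eq minus_divide_divide)
qed

lemma act_pm_class: "act (pm_class M) z = moeb M z"
proof -
  have "(SOME N. N \<in> pm_class M) \<in> pm_class M"
    by (rule someI[of _ M]) (simp add: pm_class_def)
  then show ?thesis
    unfolding act_def pm_class_def using moeb_mneg[of M z] by auto
qed

lemma PSL2Z_iff: "g \<in> PSL2Z \<longleftrightarrow> (\<exists>M \<in> SL2Z. g = pm_class M)"
  unfolding PSL2Z_def pm_class_def by blast

lemma moeb_denom_nonzero:
  assumes "Im z > 0" "(a,b,c,d) \<in> SL2Z"
  shows "of_int c * z + of_int d \<noteq> 0"
proof
  assume denom: "of_int c * z + of_int d = 0"
  have "of_int c * Im z = Im (of_int c * z + of_int d)"
    by simp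
  then have "of_int c * Im z = 0"
    by (simp only: denom zero_complex.sel)
  then have "c = 0"
    using assms(1) by simp
  with denom assms(2) show False
    by simp
qed

lemma Im_moeb_pos:
  assumes z: "Im z > 0" and M: "(a,b,c,d) \<in> SL2Z"
  shows "Im (moeb (a,b,c,d) z) > 0"
proof -
  let ?num = "of_int a * z + of_int b" and ?den = "of_int c * z + of_int d"
  have "Im ?num * Re ?den - Re ?num * Im ?den = of_int (a*d - b*c) * Im z"
    by (simp add: algebra_simps)
  also have "\<dots> = Im z"
    using M by simp
  finally have cross: "Im ?num * Re ?den - Re ?num * Im ?den = Im z" .
  have "(Re ?den)\<^sup>2 + (Im ?den)\<^sup>2 > 0"
    using moeb_denom_nonzero[OF z M] by (simp add: complex_eq_iff sum_power2_gt_zero_iff)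
  then show ?thesis
    unfolding moeb_eq Im_divide cross using z by simp
qed

lemma moeb_mmult:
  assumes z: "Im z > 0" and "N \<in> SL2Z"
  shows "moeb (mmult M N) z = moeb M (moeb N z)"
proof (cases M, cases N)
  fix a b c d e f g h
  assume M: "M = (a,b,c,d)" and N: "N = (e,f,g,h)"
  let ?u = "of_int e * z + of_int f" and ?v = "of_int g * z + of_int h"
  have v: "?v \<noteq> 0"
    using moeb_denom_nonzero[OF z] assms N by blast
  have "moeb M (moeb N z) = (of_int a * ?u + of_int b * ?v) / (of_int c * ?u + of_int d * ?v)"
    using v by (simp add: M N divide_simps)
  also have "\<dots> = moeb (mmult M N) z"
    by (simp add: M N algebra_simps)
  finally show ?thesis ..
qed

lemma Im_act_pos: "g \<in> PSL2Z \<Longrightarrow> Im z > 0 \<Longrightarrow> Im (act g z) > 0"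
  by (metis Im_moeb_pos PSL2Z_iff act_pm_class prod_cases4)

lemma lmult_pm_class: "lmult N (pm_class M) = pm_class (mmult N M)"
  by (simp add: lmult_def pm_class_def mmult_mneg_right)

lemma PSL2Z_lmult: "N \<in> SL2Z \<Longrightarrow> g \<in> PSL2Z \<Longrightarrow> lmult N g \<in> PSL2Z"
  by (auto simp: PSL2Z_iff lmult_pm_class intro: SL2Z_mmult)

lemma act_lmult:
  "Im z > 0 \<Longrightarrow> N \<in> SL2Z \<Longrightarrow> g \<in> PSL2Z \<Longrightarrow> act (lmult N g) z = moeb N (act g z)"
  by (auto simp: PSL2Z_iff lmult_pm_class act_pm_class moeb_mmult)

lemma lmult_madj_cancel:
  assumes "M \<in> SL2Z" "g \<in> PSL2Z"
  shows "lmult M (lmult (madj M) g) = g" "lmult (madj M) (lmult M g) = g"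
  using assms by (auto simp: PSL2Z_iff lmult_pm_class mmult_assoc mmult_madj madj_mmult)

lemma moeb_madj_cancel:
  assumes "Im z > 0" "M \<in> SL2Z"
  shows "moeb (madj M) (moeb M z) = z"
proof -
  have "moeb (madj M) (moeb M z) = moeb (mmult (madj M) M) z"
    using moeb_mmult[OF assms] ..
  also have "\<dots> = z"
    by (simp add: madj_mmult[OF assms(2)])
  finally show ?thesis .
qed

lemma card_act_fiber:
  assumes z: "Im z > 0" and g0: "g0 \<in> PSL2Z"
  shows "card {g \<in> PSL2Z. act g z = act g0 z} = card {g \<in> PSL2Z. act g z = z}"
proof -
  obtain M0 where M0: "M0 \<in> SL2Z" "g0 = pm_class M0"
    using g0 PSL2Z_iff by blast
  have M0': "madj M0 \<in> SL2Z"
    using SL2Z_madj[OF M0(1)] .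
  have act_g0: "act g0 z = moeb M0 z"
    by (simp add: M0(2) act_pm_class)
  show ?thesis
  proof (rule bij_betw_same_card, rule bij_betw_byWitness[where f' = "lmult M0"])
    show "lmult (madj M0) ` {g \<in> PSL2Z. act g z = act g0 z} \<subseteq> {g \<in> PSL2Z. act g z = z}"
      using z M0(1) M0' by (auto simp: act_lmult act_g0 moeb_madj_cancel PSL2Z_lmult)
    show "lmult M0 ` {g \<in> PSL2Z. act g z = z} \<subseteq> {g \<in> PSL2Z. act g z = act g0 z}"
      using z M0(1) by (auto simp: act_lmult act_g0 PSL2Z_lmult)
  qed (use M0(1) lmult_madj_cancel in auto)
qed

section \<open>The weighted Cayley map\<close>

definition weighted_cayley :: "complex \<Rightarrow> complex \<Rightarrow> complex" where
  "weighted_cayley z w =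
     complex_of_real (2 * (Im z)\<^sup>2 * cosh_rho z w + 2 * (Im z)\<^sup>2) * (\<i> * (w - z) / (w - cnj z))"

text \<open>The weight equals \<open>Im z / Im w \<cdot> \<bar>w - cnj z\<bar>\<^sup>2\<close>, which cancels the denominator of the Cayley map.\<close>

lemma weighted_cayley_eq:
  assumes z: "Im z > 0" and w: "Im w > 0"
  shows "weighted_cayley z w = Complex (2 * (Re w - Re z) * (Im z)\<^sup>2 / Im w)
           (Im z * ((Re w - Re z)\<^sup>2 + (Im w)\<^sup>2 - (Im z)\<^sup>2) / Im w)"
proof -
  define D where "D = w - cnj z"
  have D_sq: "(cmod D)\<^sup>2 = (Re w - Re z)\<^sup>2 + (Im w + Im z)\<^sup>2"
    by (simp add: D_def cmod_power2)
  have D_pos: "(cmod D)\<^sup>2 > 0"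
    unfolding D_sq using z w by (simp add: sum_power2_gt_zero_iff)
  have weight: "2 * (Im z)\<^sup>2 * cosh_rho z w + 2 * (Im z)\<^sup>2 = (Im z / Im w) * (cmod D)\<^sup>2"
  proof -
    have "(cmod (z - w))\<^sup>2 = (Re z - Re w)\<^sup>2 + (Im z - Im w)\<^sup>2"
      by (simp add: cmod_power2)
    then show ?thesis
      unfolding cosh_rho_def D_sq using z w by (simp only:) (simp add: field_simps power2_eq_square)
  qed
  have "weighted_cayley z w
      = complex_of_real (Im z / Im w) * complex_of_real ((cmod D)\<^sup>2) * (\<i> * (w - z) * cnj D / complex_of_real ((cmod D)\<^sup>2))"
    unfolding weighted_cayley_def weight D_def[symmetric] complex_div_cnj[of _ D] by simp
  also have "\<dots> = complex_of_real (Im z / Im w) * (\<i> * (w - z) * cnj D)"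
    using D_pos by (simp del: of_real_power)
  also have "\<dots> = Complex (2 * (Re w - Re z) * (Im z)\<^sup>2 / Im w)
      (Im z * ((Re w - Re z)\<^sup>2 + (Im w)\<^sup>2 - (Im z)\<^sup>2) / Im w)"
    by (simp add: D_def complex_eq_iff field_simps power2_eq_square)
  finally show ?thesis .
qed

lemma inj_on_weighted_cayley:
  assumes z: "Im z > 0"
  shows "inj_on (weighted_cayley z) {w. Im w > 0}"
proof (rule inj_onI, simp only: mem_Collect_eq)
  fix w1 w2
  assume w1: "Im w1 > 0" and w2: "Im w2 > 0" and eq: "weighted_cayley z w1 = weighted_cayley z w2"
  let ?l = "Im z" and ?u1 = "Re w1 - Re z" and ?u2 = "Re w2 - Re z"
  let ?y1 = "Im w1" and ?y2 = "Im w2"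
  have re: "2 * ?u1 * ?l\<^sup>2 / ?y1 = 2 * ?u2 * ?l\<^sup>2 / ?y2"
    and im: "?l * (?u1\<^sup>2 + ?y1\<^sup>2 - ?l\<^sup>2) / ?y1 = ?l * (?u2\<^sup>2 + ?y2\<^sup>2 - ?l\<^sup>2) / ?y2"
    using eq unfolding weighted_cayley_eq[OF z w1] weighted_cayley_eq[OF z w2] by simp_all
  define P where "P = ?u1 / ?y1"
  have "(?u1 * ?y2) * (2 * ?l\<^sup>2) = (?u2 * ?y1) * (2 * ?l\<^sup>2)"
    using re w1 w2 by (simp add: field_simps)
  then have "?u1 * ?y2 = ?u2 * ?y1"
    using z by simp
  then have u1: "?u1 = P * ?y1" and u2: "?u2 = P * ?y2"
    using w1 w2 by (simp_all add: P_def field_simps)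
  have "?y2 * (?u1\<^sup>2 + ?y1\<^sup>2 - ?l\<^sup>2) * ?l = ?y1 * (?u2\<^sup>2 + ?y2\<^sup>2 - ?l\<^sup>2) * ?l"
    using im w1 w2 by (simp add: field_simps)
  then have "?y2 * (?u1\<^sup>2 + ?y1\<^sup>2 - ?l\<^sup>2) = ?y1 * (?u2\<^sup>2 + ?y2\<^sup>2 - ?l\<^sup>2)"
    using z by simp
  then have "(?y1 - ?y2) * ((P\<^sup>2 + 1) * ?y1 * ?y2 + ?l\<^sup>2) = 0"
    unfolding u1 u2 by (simp add: algebra_simps power2_eq_square)
  moreover have "(P\<^sup>2 + 1) * ?y1 * ?y2 + ?l\<^sup>2 > 0"
  proof -
    have "P\<^sup>2 + 1 > 0"
      by (simp add: add_nonneg_pos)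
    then show ?thesis
      using w1 w2 z by (simp add: add_pos_pos)
  qed
  ultimately have "?y1 = ?y2"
    by simp
  with u1 u2 show "w1 = w2"
    by (simp add: complex_eq_iff)
qed

lemma card_weighted_cayley_fiber:
  assumes z: "Im z > 0" and g0: "g0 \<in> PSL2Z"
  shows "card {g \<in> PSL2Z. weighted_cayley z (act g z) = weighted_cayley z (act g0 z)}
    = card {g \<in> PSL2Z. act g z = z}"
proof -
  have "{g \<in> PSL2Z. weighted_cayley z (act g z) = weighted_cayley z (act g0 z)}
      = {g \<in> PSL2Z. act g z = act g0 z}"
    using inj_on_weighted_cayley[OF z] Im_act_pos[OF _ z] g0 by (auto simp: inj_on_eq_iff)
  then show ?thesis
    using card_act_fiber[OF z g0] by simp
qed

section \<open>Matrices fixing a point of discriminant \<open>-q\<close>\<close>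

definition fixing_matrices :: "complex \<Rightarrow> mat2 set" where
  "fixing_matrices z = {M \<in> SL2Z. moeb M z = z}"

text \<open>A pair \<open>(n, t)\<close> stands for the element \<open>(n + t \<surd>-q) / 2\<close> of norm one.\<close>

definition norm_one_pairs :: "nat \<Rightarrow> (int \<times> int) set" where
  "norm_one_pairs q = {(n, t). n\<^sup>2 + int q * t\<^sup>2 = 4}"

lemma moeb_fixes_iff:
  assumes l: "l > 0" and M: "(a,b,c,d) \<in> SL2Z"
  shows "moeb (a,b,c,d) (Complex m l) = Complex m l \<longleftrightarrow>
    of_int a - of_int d = 2 * m * of_int c \<and> of_int b = - of_int c * (m\<^sup>2 + l\<^sup>2)"
proof -
  let ?z = "Complex m l"
  have "of_int c * ?z + of_int d \<noteq> 0"
    using moeb_denom_nonzero[of ?z a b c d] l M by simp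
  then have "moeb (a,b,c,d) ?z = ?z \<longleftrightarrow> of_int a * ?z + of_int b = ?z * (of_int c * ?z + of_int d)"
    by (simp add: divide_eq_eq mult.commute)
  also have "\<dots> \<longleftrightarrow> of_int a * m + of_int b = of_int c * (m\<^sup>2 - l\<^sup>2) + of_int d * m
                   \<and> (of_int a - of_int d) * l = (2 * m * of_int c) * l"
    by (simp add: complex_eq_iff algebra_simps power2_eq_square)
  also have "\<dots> \<longleftrightarrow> of_int a - of_int d = 2 * m * of_int c \<and> of_int b = - of_int c * (m\<^sup>2 + l\<^sup>2)"
  proof -
    have "(of_int a - of_int d) * l = 2 * m * of_int c * l \<longleftrightarrow> of_int a - of_int d = 2 * m * of_int c"
      using l by simp
    moreover have "of_int a * m + of_int b = of_int c * (m\<^sup>2 - l\<^sup>2) + of_int d * m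
        \<longleftrightarrow> of_int b = - of_int c * (m\<^sup>2 + l\<^sup>2)"
      if "of_int a = of_int d + 2 * m * of_int c"
      using that by (simp add: algebra_simps power2_eq_square) (auto simp: algebra_simps)
    ultimately show ?thesis
      by (auto simp: algebra_simps)
  qed
  finally show ?thesis .
qed

lemma fixing_matrices_eq:
  assumes "q > 0"
  shows "fixing_matrices (Complex (of_int e / 2) (sqrt q / 2)) =
    {(a,b,c,d). a*d - b*c = 1 \<and> a - d = e*c \<and> 4*b = -c*(e\<^sup>2 + int q)}"
proof (rule set_eqI)
  fix M :: mat2
  obtain a b c d where M: "M = (a,b,c,d)"
    by (cases M) auto
  have l: "sqrt q / 2 > 0"
    using assms by simp
  have "(of_int e / 2)\<^sup>2 + (sqrt q / 2)\<^sup>2 = of_int (e\<^sup>2 + int q) / 4"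
    by (simp add: power_divide)
  then have "(of_int a - of_int d = 2 * (of_int e / 2) * (of_int c :: real)
       \<and> of_int b = - of_int c * ((of_int e / 2)\<^sup>2 + (sqrt q / 2)\<^sup>2))
     \<longleftrightarrow> (real_of_int (a - d) = of_int (e*c) \<and> real_of_int (4*b) = of_int (-c*(e\<^sup>2 + int q)))"
    by (simp add: field_simps)
  also have "\<dots> \<longleftrightarrow> a - d = e*c \<and> 4*b = -c*(e\<^sup>2 + int q)"
    by (simp only: of_int_eq_iff)
  finally show "M \<in> fixing_matrices (Complex (of_int e / 2) (sqrt q / 2)) \<longleftrightarrow>
      M \<in> {(a,b,c,d). a*d - b*c = 1 \<and> a - d = e*c \<and> 4*b = -c*(e\<^sup>2 + int q)}"
    unfolding fixing_matrices_def M using moeb_fixes_iff[OF l, of a b c d "of_int e / 2"]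
    by (cases "a*d - b*c = 1") auto
qed

lemma norm_one_pair_parity:
  assumes "(n, t) \<in> norm_one_pairs q" "4 dvd e\<^sup>2 + int q"
  shows "even (n - e*t)"
proof -
  have "(n - e*t) * (n + e*t) = 4 - (e\<^sup>2 + int q) * t\<^sup>2"
    using assms(1) by (simp add: norm_one_pairs_def algebra_simps power2_eq_square)
  then have "4 dvd (n - e*t) * (n + e*t)"
    using assms(2) by simp
  then have "even ((n - e*t) * (n + e*t))"
    by (rule dvd_trans[rotated]) simp
  moreover have "even (n + e*t) \<longleftrightarrow> even (n - e*t)"
    by (metis diff_add_cancel dvd_add_left_iff even_add mult_2 add.assoc)
  ultimately show ?thesis
    by auto
qed

text \<open>The pair \<open>(a + d, c)\<close> encodes the eigenvalue \<open>c z + d = (a + d + c \<surd>-q) / 2\<close>. Conversely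
  \<open>a, d = (n \<plusminus> e t) / 2\<close> and \<open>b = - t (e\<^sup>2 + q) / 4\<close>, which are integers because \<open>4 dvd e\<^sup>2 + q\<close>.\<close>

lemma bij_betw_fixing_matrices_norm_one_pairs:
  assumes q: "q > 0" and disc: "4 dvd e\<^sup>2 + int q"
  shows "bij_betw (\<lambda>(a,b,c,d). (a + d, c))
           (fixing_matrices (Complex (of_int e / 2) (sqrt q / 2))) (norm_one_pairs q)"
proof -
  let ?F = "{(a,b,c,d). a*d - b*c = 1 \<and> a - d = e*c \<and> 4*b = -c*(e\<^sup>2 + int q)}"
  let ?to_pair = "\<lambda>(a,b,c,d). (a + d, c)"
  obtain k where k: "e\<^sup>2 + int q = 4 * k"
    using disc by blast
  define from_pair where
    "from_pair = (\<lambda>(n, t). ((n + e*t) div 2, - t*k, t, (n - e*t) div 2) :: mat2)"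
  have to_pair: "?to_pair M \<in> norm_one_pairs q" if "M \<in> ?F" for M
  proof -
    obtain a b c d where M: "M = (a,b,c,d)" and det: "a*d - b*c = 1"
      and diff: "a - d = e*c" and b: "4*b + c*(e\<^sup>2 + int q) = 0"
      using \<open>M \<in> ?F\<close> by auto
    have "(a + d)\<^sup>2 + int q * c\<^sup>2
        = (a - d)\<^sup>2 - e\<^sup>2 * c\<^sup>2 + 4 * (a*d - b*c) + c * (4*b + c * (e\<^sup>2 + int q))"
      by (simp add: algebra_simps power2_eq_square)
    also have "\<dots> = 4"
      unfolding det diff b by (simp add: power_mult_distrib)
    finally show ?thesis
      by (simp add: M norm_one_pairs_def)
  qed
  have from_pair: "from_pair p \<in> ?F \<and> ?to_pair (from_pair p) = p" if "p \<in> norm_one_pairs q" for p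
  proof -
    obtain n t where p: "p = (n, t)" and n: "n\<^sup>2 + int q * t\<^sup>2 = 4"
      using \<open>p \<in> norm_one_pairs q\<close> by (auto simp: norm_one_pairs_def)
    have "(n, t) \<in> norm_one_pairs q"
      using that p by simp
    then obtain h where h: "n - e*t = 2*h"
      using norm_one_pair_parity disc by blast
    have "4 * ((h + e*t) * h + t * k * t) = (2*h + e*t)\<^sup>2 + (4*k - e\<^sup>2) * t\<^sup>2"
      by (simp add: algebra_simps power2_eq_square)
    also have "\<dots> = n\<^sup>2 + int q * t\<^sup>2"
    proof -
      have "2*h + e*t = n" "4*k - e\<^sup>2 = int q"
        using h k by simp_all
      then show ?thesis
        by simp
    qed
    finally have "(h + e*t) * h + t * k * t = 1"
      using n by simp
    moreover have "from_pair p = (h + e*t, - t*k, t, h)"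
      unfolding from_pair_def p using h by simp
    ultimately show ?thesis
      using h k p by (simp add: algebra_simps)
  qed
  show ?thesis
    unfolding fixing_matrices_eq[OF q]
  proof (rule bij_betw_byWitness[where f' = from_pair])
    show "\<forall>M \<in> ?F. from_pair (?to_pair M) = M"
      by (auto simp: from_pair_def k)
    show "\<forall>p \<in> norm_one_pairs q. ?to_pair (from_pair p) = p"
      by (intro ballI) (rule from_pair[THEN conjunct2])
    show "from_pair ` norm_one_pairs q \<subseteq> ?F"
      by (intro image_subsetI) (rule from_pair[THEN conjunct1])
    show "?to_pair ` ?F \<subseteq> norm_one_pairs q"
      by (intro image_subsetI) (rule to_pair)
  qed
qed

lemma finite_norm_one_pairs:
  assumes "q > 0"
  shows "finite (norm_one_pairs q)"
proof (rule finite_subset)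
  show "norm_one_pairs q \<subseteq> {-2..2} \<times> {-2..2}"
  proof clarify
    fix n t
    assume "(n, t) \<in> norm_one_pairs q"
    then have n: "n\<^sup>2 + int q * t\<^sup>2 = 4"
      by (simp add: norm_one_pairs_def)
    have "t\<^sup>2 \<le> int q * t\<^sup>2"
      using assms by (simp add: mult_le_cancel_right1)
    moreover have "0 \<le> t\<^sup>2" "0 \<le> n\<^sup>2"
      by simp_all
    ultimately have "n\<^sup>2 \<le> 4" "t\<^sup>2 \<le> 4"
      using n by linarith+
    then show "n \<in> {-2..2} \<and> t \<in> {-2..2}"
      using power2_le_iff_abs_le[of 2 n] power2_le_iff_abs_le[of 2 t] by (simp add: abs_le_iff)
  qed
qed simp

lemma stab_eq_pm_class_image: "stab q = pm_class ` fixing_matrices (zq q)"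
  unfolding stab_def fixing_matrices_def using act_pm_class PSL2Z_iff by auto

lemma card_pm_class_image:
  assumes "finite S" "S \<subseteq> SL2Z" "\<And>M. M \<in> S \<Longrightarrow> mneg M \<in> S"
  shows "card S = 2 * card (pm_class ` S)"
proof -
  have "S = \<Union> (pm_class ` S)"
    using assms(3) by (auto simp: pm_class_def)
  also have "card \<dots> = sum card (pm_class ` S)"
  proof (rule card_Union_disjoint)
    show "pairwise disjnt (pm_class ` S)"
      unfolding pairwise_def disjnt_def pm_class_def by (auto simp: insert_commute)
  qed (auto simp: pm_class_def)
  also have "\<dots> = sum (\<lambda>_. 2) (pm_class ` S)"
  proof (rule sum.cong)
    show "card C = 2" if "C \<in> pm_class ` S" for C
      using that mneg_neq assms(2) by (force simp: pm_class_def)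
  qed simp
  finally show ?thesis
    by simp
qed

lemma bij_betw_fixing_matrices_zq:
  assumes "q \<in> {3, 4, 7, 8, 11, 19, 43, 67, 163}"
  shows "bij_betw (\<lambda>(a,b,c,d). (a + d, c)) (fixing_matrices (zq q)) (norm_one_pairs q)"
proof -
  define e :: int where "e = (if q \<in> {4, 8} then 0 else 1)"
  have "zq q = Complex (of_int e / 2) (sqrt q / 2)"
    by (simp add: zq_def mu_def lam_def e_def)
  moreover have "q > 0" "4 dvd e\<^sup>2 + int q"
    using assms by (auto simp: e_def)
  ultimately show ?thesis
    using bij_betw_fixing_matrices_norm_one_pairs by simp
qed

lemma card_fixing_matrices_zq:
  assumes "finite (fixing_matrices (zq q))"
  shows "finite (stab q)" "card (fixing_matrices (zq q)) = 2 * card (stab q)"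
proof -
  have "mneg M \<in> fixing_matrices (zq q)" if "M \<in> fixing_matrices (zq q)" for M
    using that by (simp add: fixing_matrices_def SL2Z_mneg moeb_mneg)
  moreover have "fixing_matrices (zq q) \<subseteq> SL2Z"
    by (auto simp: fixing_matrices_def)
  ultimately show "finite (stab q)" "card (fixing_matrices (zq q)) = 2 * card (stab q)"
    unfolding stab_eq_pm_class_image using assms by (simp_all add: card_pm_class_image)
qed

section \<open>Units of \<open>\<O>\<^sub>K\<close>\<close>

lemma rat_in_Ints_if_bounded_denominators:
  fixes u :: rat
  assumes D: "D > 0" and powers: "\<And>k. u ^ k * of_int D \<in> \<int>"
  shows "u \<in> \<int>"
proof -
  obtain a b where ab: "quotient_of u = (a, b)"
    by (cases "quotient_of u") auto
  have b: "b > 0" and cop: "coprime a b" and u: "u = of_int a / of_int b"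
    using quotient_of_denom_pos[OF ab] quotient_of_coprime[OF ab] quotient_of_div[OF ab] by simp_all
  have dvd: "b ^ k dvd D" for k
  proof -
    obtain c where "u ^ k * of_int D = of_int c"
      using powers[of k] Ints_cases by blast
    then have "of_int (a ^ k * D) = (of_int (c * b ^ k) :: rat)"
      unfolding u using b by (simp add: power_divide field_simps)
    then have "b ^ k dvd a ^ k * D"
      by (metis dvd_triv_right of_int_eq_iff)
    moreover have "coprime (b ^ k) (a ^ k)"
      using cop by (simp add: coprime_commute)
    ultimately show ?thesis
      using coprime_dvd_mult_right_iff by blast
  qed
  have "b = 1"
  proof (rule ccontr)
    assume "b \<noteq> 1"
    then have "2 ^ nat D \<le> b ^ nat D"
      using b by (simp add: power_mono)
    also have "\<dots> \<le> D"
      using dvd[of "nat D"] D by (simp add: zdvd_imp_le)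
    finally show False
      using of_nat_less_two_power[of "nat D"] D by simp
  qed
  then show ?thesis
    using u by simp
qed

lemma rat_in_Ints_if_square_in_Ints:
  fixes u :: rat
  assumes "u\<^sup>2 \<in> \<int>"
  shows "u \<in> \<int>"
proof -
  obtain a b where ab: "quotient_of u = (a, b)"
    by (cases "quotient_of u") auto
  have b: "b > 0" and ub: "u * of_int b = of_int a"
    using quotient_of_denom_pos[OF ab] quotient_of_div[OF ab] by simp_all
  have "u ^ k * of_int b \<in> \<int>" for k
  proof (cases "even k")
    case True
    then obtain j where "k = 2 * j"
      by blast
    then have "u ^ k * of_int b = (u\<^sup>2) ^ j * of_int b"
      by (simp add: power_mult)
    then show ?thesis
      using assms by (simp only: Ints_mult Ints_power Ints_of_int)
  next
    case False
    then obtain j where "k = 2 * j + 1"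
      using oddE by blast
    then have "u ^ k * of_int b = (u\<^sup>2) ^ j * (u * of_int b)"
      by (simp add: power_mult mult.assoc)
    then show ?thesis
      using assms by (simp only: ub Ints_mult Ints_power Ints_of_int)
  qed
  then show ?thesis
    using rat_in_Ints_if_bounded_denominators[OF b] by blast
qed

abbreviation sqrt_neg :: "nat \<Rightarrow> complex" where
  "sqrt_neg q \<equiv> \<i> * of_real (sqrt (real q))"

lemma of_real_sqrt_square: "complex_of_real (sqrt (real q)) * complex_of_real (sqrt (real q)) = of_nat q"
  by (simp flip: of_real_mult)

lemma sqrt_neg_square: "sqrt_neg q * sqrt_neg q = - of_nat q"
  using of_real_sqrt_square[of q] by (simp add: mult_ac)

lemma Kfield_iff: "x \<in> Kfield q \<longleftrightarrow> (\<exists>r s. x = of_real (of_rat r) + of_real (of_rat s) * sqrt_neg q)"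
  unfolding Kfield_def mem_Collect_eq mult.assoc by blast

definition frac_lattice :: "nat \<Rightarrow> int \<Rightarrow> complex set" where
  "frac_lattice q D = {(of_int a + of_int b * sqrt_neg q) / of_int D | a b. True}"

lemma frac_latticeI: "x = (of_int a + of_int b * sqrt_neg q) / of_int D \<Longrightarrow> x \<in> frac_lattice q D"
  unfolding frac_lattice_def by blast

lemma frac_latticeE:
  assumes "x \<in> frac_lattice q D"
  obtains a b where "x = (of_int a + of_int b * sqrt_neg q) / of_int D"
  using assms unfolding frac_lattice_def by blast

lemma frac_lattice_add:
  assumes "x \<in> frac_lattice q D" "y \<in> frac_lattice q D"
  shows "x + y \<in> frac_lattice q D"
proof -
  obtain a b a' b' where "x = (of_int a + of_int b * sqrt_neg q) / of_int D"
    and "y = (of_int a' + of_int b' * sqrt_neg q) / of_int D"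
    using assms by (metis frac_latticeE)
  then have "x + y = (of_int (a + a') + of_int (b + b') * sqrt_neg q) / of_int D"
    by (simp add: add_divide_distrib[symmetric] algebra_simps)
  then show ?thesis
    by (rule frac_latticeI)
qed

lemma frac_lattice_mult_int:
  assumes "x \<in> frac_lattice q D"
  shows "of_int k * x \<in> frac_lattice q D"
proof -
  obtain a b where "x = (of_int a + of_int b * sqrt_neg q) / of_int D"
    using assms by (rule frac_latticeE)
  then have "of_int k * x = (of_int (k * a) + of_int (k * b) * sqrt_neg q) / of_int D"
    by (simp add: algebra_simps)
  then show ?thesis
    by (rule frac_latticeI)
qed

lemma frac_lattice_sum:
  "(\<And>i. i \<in> A \<Longrightarrow> f i \<in> frac_lattice q D) \<Longrightarrow> sum f A \<in> frac_lattice q D"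
proof (induction A rule: infinite_finite_induct)
  case (infinite A)
  then show ?case
    using frac_latticeI[of 0 0 0] by simp
next
  case empty
  then show ?case
    using frac_latticeI[of 0 0 0] by simp
next
  case (insert i A)
  then show ?case
    by (simp add: frac_lattice_add)
qed

lemma frac_lattice_mult:
  assumes "x \<in> frac_lattice q D" "y \<in> frac_lattice q E"
  shows "x * y \<in> frac_lattice q (D * E)"
proof -
  obtain a b a' b' where "x = (of_int a + of_int b * sqrt_neg q) / of_int D"
    and "y = (of_int a' + of_int b' * sqrt_neg q) / of_int E"
    using assms by (metis frac_latticeE)
  then have "x * y = (of_int (a*a' - int q * b*b') + of_int (a*b' + b*a') * sqrt_neg q) / of_int (D * E)"
    by (simp add: algebra_simps of_real_sqrt_square)
  then show ?thesis
    by (rule frac_latticeI)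
qed

lemma frac_lattice_power: "x \<in> frac_lattice q D \<Longrightarrow> x ^ k \<in> frac_lattice q (D ^ k)"
proof (induction k)
  case 0
  then show ?case
    using frac_latticeI[of 1 1 0] by simp
next
  case (Suc k)
  then show ?case
    using frac_lattice_mult by (simp add: mult.commute)
qed

lemma frac_lattice_dvd:
  assumes "x \<in> frac_lattice q D" "D dvd E" "E \<noteq> 0"
  shows "x \<in> frac_lattice q E"
proof -
  obtain a b where x: "x = (of_int a + of_int b * sqrt_neg q) / of_int D"
    using assms(1) by (rule frac_latticeE)
  obtain m where E: "E = D * m"
    using assms(2) by blast
  have "x = (of_int (a * m) + of_int (b * m) * sqrt_neg q) / of_int E"
    using assms(3) unfolding x E by (simp add: field_simps)
  then show ?thesis
    by (rule frac_latticeI)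
qed

lemma norm_frac_lattice_ge:
  assumes "x \<in> frac_lattice q D" "x \<noteq> 0" "q > 0" "D > 0"
  shows "cmod x \<ge> 1 / of_int D"
proof -
  obtain a b where x: "x = (of_int a + of_int b * sqrt_neg q) / of_int D"
    using assms(1) by (rule frac_latticeE)
  let ?A = "of_int a + of_int b * sqrt_neg q"
  have "a \<noteq> 0 \<or> b \<noteq> 0"
    using assms(2) x by auto
  then have "(real_of_int a)\<^sup>2 + real q * (real_of_int b)\<^sup>2 \<ge> 1"
  proof
    assume "a \<noteq> 0"
    then have "a\<^sup>2 \<ge> 1"
      by (simp add: int_one_le_iff_zero_less)
    then have "(real_of_int a)\<^sup>2 \<ge> 1"
      by (metis of_int_1_le_iff of_int_power)
    moreover have "real q * (real_of_int b)\<^sup>2 \<ge> 0"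
      by simp
    ultimately show ?thesis
      by linarith
  next
    assume "b \<noteq> 0"
    then have "b\<^sup>2 \<ge> 1"
      by (simp add: int_one_le_iff_zero_less)
    then have "(real_of_int b)\<^sup>2 \<ge> 1"
      by (metis of_int_1_le_iff of_int_power)
    moreover have "real q \<ge> 1"
      using assms(3) by simp
    ultimately have "real q * (real_of_int b)\<^sup>2 \<ge> 1"
      using mult_mono[of 1 "real q" 1 "(real_of_int b)\<^sup>2"] by simp
    moreover have "(real_of_int a)\<^sup>2 \<ge> 0"
      by simp
    ultimately show ?thesis
      by linarith
  qed
  then have "(cmod ?A)\<^sup>2 \<ge> 1"
    by (simp add: cmod_power2 power_mult_distrib mult.commute)
  then have "cmod ?A \<ge> 1"
    using abs_le_square_iff[of 1 "cmod ?A"] by simp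
  then show ?thesis
    using assms(4) by (simp add: x norm_divide divide_right_mono)
qed

lemma Kfield_in_frac_lattice:
  assumes "x \<in> Kfield q"
  obtains D where "D > 0" "x \<in> frac_lattice q D"
proof -
  obtain r s where x: "x = of_real (of_rat r) + of_real (of_rat s) * sqrt_neg q"
    using assms Kfield_iff by blast
  obtain a1 b1 where r: "quotient_of r = (a1, b1)"
    by (cases "quotient_of r") auto
  obtain a2 b2 where s: "quotient_of s = (a2, b2)"
    by (cases "quotient_of s") auto
  have b1: "b1 > 0" and b2: "b2 > 0"
    using quotient_of_denom_pos[OF r] quotient_of_denom_pos[OF s] .
  have r': "of_real (of_rat r) = (of_int a1 / of_int b1 :: complex)"
    and s': "of_real (of_rat s) = (of_int a2 / of_int b2 :: complex)"
    using quotient_of_div[OF r] quotient_of_div[OF s] by (simp_all add: of_rat_divide)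
  have "x = (of_int (a1 * b2) + of_int (a2 * b1) * sqrt_neg q) / of_int (b1 * b2)"
    unfolding x r' s' using b1 b2 by (simp add: field_simps)
  then have "x \<in> frac_lattice q (b1 * b2)"
    by (rule frac_latticeI)
  with b1 b2 show ?thesis
    using that mult_pos_pos by blast
qed

lemma algebraic_integer_power_recurrence:
  assumes "algebraic_integer x"
  obtains n c where "n > 0" "x ^ n = (\<Sum>i<n. of_int (c i) * x ^ i)"
proof -
  obtain p :: "int poly" where p1: "lead_coeff p = 1" and p0: "poly (map_poly of_int p) x = 0"
    using assms unfolding algebraic_integer_def by blast
  define n where "n = degree p"
  define P where "P = (map_poly of_int p :: complex poly)"
  have degP: "degree P = n"
    unfolding P_def n_def by (rule degree_map_poly) simp
  have coeffP: "coeff P i = of_int (coeff p i)" for i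
    unfolding P_def by (rule coeff_map_poly) simp
  have "0 = (\<Sum>i\<le>n. coeff P i * x ^ i)"
    using p0 unfolding P_def[symmetric] poly_altdef degP by simp
  also have "\<dots> = (\<Sum>i<n. coeff P i * x ^ i) + x ^ n"
    using p1 unfolding n_def[symmetric] by (simp add: lessThan_Suc_atMost[symmetric] coeffP)
  finally have "x ^ n = - (\<Sum>i<n. of_int (coeff p i) * x ^ i)"
    unfolding coeffP by (simp add: eq_neg_iff_add_eq_0 add.commute)
  also have "\<dots> = (\<Sum>i<n. of_int (- coeff p i) * x ^ i)"
    by (simp add: sum_negf)
  finally have xn: "x ^ n = (\<Sum>i<n. of_int (- coeff p i) * x ^ i)" .
  have "n > 0"
  proof (rule ccontr)
    assume "\<not> n > 0"
    with xn show False
      by simp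
  qed
  from this xn show ?thesis
    by (rule that)
qed

lemma powers_in_frac_lattice_if_recurrence:
  assumes rec: "x ^ n = (\<Sum>i<n. of_int (c i) * x ^ i)" and "n > 0"
    and init: "\<And>i. i < n \<Longrightarrow> x ^ i \<in> frac_lattice q D"
  shows "x ^ k \<in> frac_lattice q D"
proof (induction k rule: less_induct)
  case (less k)
  show ?case
  proof (cases "k < n")
    case False
    then have "x ^ k = x ^ (k - n) * x ^ n"
      by (simp flip: power_add)
    also have "\<dots> = (\<Sum>i<n. of_int (c i) * x ^ (k - n + i))"
      unfolding rec by (simp add: sum_distrib_left power_add algebra_simps)
    also have "\<dots> \<in> frac_lattice q D"
      using less False \<open>n > 0\<close> by (intro frac_lattice_sum frac_lattice_mult_int) auto
    finally show ?thesis .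
  qed (rule init)
qed

lemma OK_powers_in_frac_lattice:
  assumes "x \<in> OK q"
  obtains D where "D > 0" "\<And>k. x ^ k \<in> frac_lattice q D"
proof -
  have "algebraic_integer x" and "x \<in> Kfield q"
    using assms by (simp_all add: OK_def)
  obtain n c where "n > 0" and rec: "x ^ n = (\<Sum>i<n. of_int (c i) * x ^ i)"
    using \<open>algebraic_integer x\<close> by (rule algebraic_integer_power_recurrence)
  obtain D where D: "D > 0" "x \<in> frac_lattice q D"
    using \<open>x \<in> Kfield q\<close> by (rule Kfield_in_frac_lattice)
  have "x ^ i \<in> frac_lattice q (D ^ n)" if "i < n" for i
  proof (rule frac_lattice_dvd)
    show "x ^ i \<in> frac_lattice q (D ^ i)"
      by (rule frac_lattice_power[OF D(2)])
    show "D ^ i dvd D ^ n"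
      using that by (simp add: le_imp_power_dvd)
  qed (use D(1) in simp)
  then have "x ^ k \<in> frac_lattice q (D ^ n)" for k
    by (rule powers_in_frac_lattice_if_recurrence[OF rec \<open>n > 0\<close>])
  moreover have "D ^ n > 0"
    using D(1) by simp
  ultimately show ?thesis
    using that by blast
qed

text \<open>Nonzero lattice points are bounded away from \<open>0\<close>, so the powers of \<open>x\<close> cannot tend to \<open>0\<close>.\<close>

lemma norm_ge_one_if_powers_in_frac_lattice:
  assumes "q > 0" "D > 0" "\<And>k. x ^ k \<in> frac_lattice q D" "x \<noteq> 0"
  shows "cmod x \<ge> 1"
proof (rule ccontr)
  assume "\<not> cmod x \<ge> 1"
  then have "cmod x < 1"
    by simp
  moreover have "1 / real_of_int D > 0"
    using assms(2) by simp
  ultimately obtain k where k: "cmod x ^ k < 1 / real_of_int D"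
    using real_arch_pow_inv by blast
  moreover have "cmod (x ^ k) \<ge> 1 / real_of_int D"
    using norm_frac_lattice_ge[OF assms(3) _ assms(1,2)] assms(4) by simp
  ultimately show False
    by (simp add: norm_power)
qed

lemma power_mult_power_of_inverse:
  fixes x y :: "'a :: comm_monoid_mult"
  assumes "x * y = 1"
  shows "x ^ i * y ^ j = (if j \<le> i then x ^ (i - j) else y ^ (j - i))"
proof (cases "j \<le> i")
  case True
  then have "x ^ i = x ^ (i - j) * x ^ j"
    by (simp flip: power_add)
  then have "x ^ i * y ^ j = x ^ (i - j) * (x * y) ^ j"
    by (simp add: power_mult_distrib mult.assoc)
  with True assms show ?thesis
    by simp
next
  case False
  then have "y ^ j = y ^ (j - i) * y ^ i"
    by (simp flip: power_add)
  then have "x ^ i * y ^ j = y ^ (j - i) * (x * y) ^ i"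
    by (simp add: power_mult_distrib mult_ac)
  with False assms show ?thesis
    by simp
qed

lemma add_power_in_frac_lattice:
  assumes "x * y = 1" "\<And>k. x ^ k \<in> frac_lattice q D" "\<And>k. y ^ k \<in> frac_lattice q D"
  shows "(x + y) ^ k \<in> frac_lattice q D"
proof -
  have "(x + y) ^ k = (\<Sum>i\<le>k. of_int (int (k choose i)) * (x ^ i * y ^ (k - i)))"
    by (simp add: binomial_ring mult.assoc)
  also have "\<dots> \<in> frac_lattice q D"
    using assms by (intro frac_lattice_sum frac_lattice_mult_int) (simp add: power_mult_power_of_inverse)
  finally show ?thesis .
qed

lemma rat_in_frac_lattice:
  assumes "complex_of_real (of_rat u) \<in> frac_lattice q D" "q > 0" "D \<noteq> 0"
  shows "u * of_int D \<in> \<int>"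
proof -
  obtain a b where u: "complex_of_real (of_rat u) = (of_int a + of_int b * sqrt_neg q) / of_int D"
    using assms(1) by (rule frac_latticeE)
  then have "of_int a + of_int b * sqrt_neg q = complex_of_real (of_rat u * of_int D)"
    using assms(3) by (simp add: field_simps)
  then have "b = 0" and "of_int a = of_rat u * real_of_int D"
    using assms(2) by (simp_all add: complex_eq_iff)
  then have "of_rat (of_int a) = (of_rat (u * of_int D) :: real)"
    by (simp add: of_rat_mult)
  then show ?thesis
    by (metis Ints_of_int of_rat_eq_iff)
qed

text \<open>A unit \<open>x\<close> and its inverse \<open>y\<close> both have norm \<open>\<ge> 1\<close>, so \<open>\<bar>x\<bar> = 1\<close> and \<open>y = cnj x\<close>;
  the powers of the trace \<open>x + y = 2 Re x\<close> then have bounded denominators.\<close>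

lemma OK_unit_half_coordinates:
  assumes q: "q > 0" and x: "x \<in> OK_units q"
  obtains n t where "x = (of_int n + of_real (of_rat t) * sqrt_neg q) / 2"
    and "of_int (n\<^sup>2) + of_nat q * t\<^sup>2 = (4 :: rat)"
proof -
  obtain y where xO: "x \<in> OK q" and yO: "y \<in> OK q" and xy: "x * y = 1"
    using x unfolding OK_units_def by blast
  obtain D1 where D1: "D1 > 0" "\<And>k. x ^ k \<in> frac_lattice q D1"
    using OK_powers_in_frac_lattice[OF xO] by blast
  obtain D2 where D2: "D2 > 0" "\<And>k. y ^ k \<in> frac_lattice q D2"
    using OK_powers_in_frac_lattice[OF yO] by blast
  define D where "D = D1 * D2"
  have D: "D > 0"
    using D1 D2 by (simp add: D_def)
  have xL: "x ^ k \<in> frac_lattice q D" and yL: "y ^ k \<in> frac_lattice q D" for k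
    using frac_lattice_dvd[OF D1(2), of D] frac_lattice_dvd[OF D2(2), of D] D1(1) D2(1)
    by (simp_all add: D_def)
  have "x \<noteq> 0" "y \<noteq> 0"
    using xy by auto
  then have "cmod x \<ge> 1" "cmod y \<ge> 1"
    using norm_ge_one_if_powers_in_frac_lattice[OF q D] xL yL by blast+
  moreover have "cmod x * cmod y = 1"
    using xy by (metis norm_mult norm_one)
  moreover have "cmod x \<le> cmod x * cmod y"
    using \<open>cmod y \<ge> 1\<close> by (simp add: mult_le_cancel_left1)
  ultimately have norm_x: "cmod x = 1"
    by linarith
  then have "x * y = x * cnj x"
    using xy by (simp add: complex_norm_square[symmetric])
  then have y: "y = cnj x"
    using \<open>x \<noteq> 0\<close> by simp
  obtain r s where xrs: "x = of_real (of_rat r) + of_real (of_rat s) * sqrt_neg q"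
    using xO Kfield_iff unfolding OK_def by blast
  have trace: "x + y = complex_of_real (of_rat (2 * r))"
    unfolding y xrs by (simp add: complex_eq_iff of_rat_mult)
  have "2 * r \<in> \<int>"
  proof (rule rat_in_Ints_if_bounded_denominators[OF D])
    fix k
    have "complex_of_real (of_rat ((2 * r) ^ k)) \<in> frac_lattice q D"
      using add_power_in_frac_lattice[OF xy xL yL, of k] unfolding trace of_rat_power of_real_power .
    then show "(2 * r) ^ k * of_int D \<in> \<int>"
      by (rule rat_in_frac_lattice[OF _ q]) (use D in simp)
  qed
  then obtain n where n: "2 * r = of_int n"
    by (rule Ints_cases)
  have "(Re x)\<^sup>2 + (Im x)\<^sup>2 = 1"
    using norm_x cmod_power2[of x] by simp
  then have "of_rat (r\<^sup>2 + of_nat q * s\<^sup>2) = (of_rat 1 :: real)"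
    unfolding xrs by (simp add: of_rat_add of_rat_mult power2_eq_square algebra_simps)
  then have norm_rs: "r\<^sup>2 + of_nat q * s\<^sup>2 = 1"
    by (simp only: of_rat_eq_iff)
  have "of_int (n\<^sup>2) + of_nat q * (2 * s)\<^sup>2 = 4 * (r\<^sup>2 + of_nat q * s\<^sup>2)"
    unfolding of_int_power n[symmetric] by (simp add: power_mult_distrib algebra_simps)
  then have "of_int (n\<^sup>2) + of_nat q * (2 * s)\<^sup>2 = (4 :: rat)"
    unfolding norm_rs by simp
  moreover have "x = (of_int n + of_real (of_rat (2 * s)) * sqrt_neg q) / 2"
  proof -
    have "(of_int n :: complex) = 2 * of_real (of_rat r)"
      using arg_cong[OF n, of "\<lambda>u. complex_of_real (of_rat u)"] by (simp add: of_rat_mult)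
    then show ?thesis
      unfolding xrs by (simp add: of_rat_mult field_simps)
  qed
  ultimately show ?thesis
    using that by blast
qed

lemma int_square_neq_between:
  assumes "0 \<le> k" "k\<^sup>2 < m" "m < (k + 1)\<^sup>2"
  shows "(c::int)\<^sup>2 \<noteq> m"
proof
  assume c: "c\<^sup>2 = m"
  have "\<not> \<bar>c\<bar> \<le> \<bar>k\<bar>" "\<not> \<bar>k + 1\<bar> \<le> \<bar>c\<bar>"
    using abs_le_square_iff[of c k] abs_le_square_iff[of "k + 1" c] c assms by simp_all
  with assms(1) show False
    by linarith
qed

lemma square_eq_mult_discriminant:
  assumes q: "q \<in> {3, 4, 7, 8, 11, 19, 43, 67, 163}" and m: "m \<in> {3, 4}" and c: "c\<^sup>2 = m * int q"
  shows "int q = m"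
  using q m c int_square_neq_between[of 3 12 c] int_square_neq_between[of 4 21 c]
    int_square_neq_between[of 4 24 c] int_square_neq_between[of 5 33 c]
    int_square_neq_between[of 7 57 c] int_square_neq_between[of 11 129 c]
    int_square_neq_between[of 14 201 c] int_square_neq_between[of 22 489 c]
    int_square_neq_between[of 5 28 c] int_square_neq_between[of 5 32 c]
    int_square_neq_between[of 6 44 c] int_square_neq_between[of 8 76 c]
    int_square_neq_between[of 13 172 c] int_square_neq_between[of 16 268 c]
    int_square_neq_between[of 25 652 c]
  by auto

text \<open>Here the list of discriminants matters: e.g. for \<open>q = 12\<close> the pair \<open>(1, 1/2)\<close> would be a solution.\<close>

lemma rat_norm_one_pair_integral:
  assumes q: "q \<in> {3, 4, 7, 8, 11, 19, 43, 67, 163}" and nt: "of_int (n\<^sup>2) + of_nat q * t\<^sup>2 = (4 :: rat)"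
  shows "t \<in> \<int>"
proof -
  have qt: "of_nat q * t\<^sup>2 = of_int (4 - n\<^sup>2)"
    using nt by simp
  have "q \<noteq> 0"
    using q by auto
  have "(of_nat q * t)\<^sup>2 = of_nat q * (of_nat q * t\<^sup>2)"
    by (simp add: power2_eq_square mult_ac)
  also have "\<dots> = of_int (int q * (4 - n\<^sup>2))"
    unfolding qt by simp
  finally have qt_sq: "(of_nat q * t)\<^sup>2 = of_int (int q * (4 - n\<^sup>2))" .
  then have "(of_nat q * t)\<^sup>2 \<in> \<int>"
    by simp
  then have "of_nat q * t \<in> \<int>"
    by (rule rat_in_Ints_if_square_in_Ints)
  then obtain c where c: "of_nat q * t = of_int c"
    by (rule Ints_cases)
  have "of_int (c\<^sup>2) = (of_int (int q * (4 - n\<^sup>2)) :: rat)"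
    using qt_sq unfolding c by simp
  then have c2: "c\<^sup>2 = (4 - n\<^sup>2) * int q"
    by (simp only: of_int_eq_iff mult.commute)
  have "(0 :: rat) \<le> of_int (4 - n\<^sup>2)"
    unfolding qt[symmetric] by simp
  then have "n\<^sup>2 \<le> 2\<^sup>2"
    by (simp only: of_int_0_le_iff) simp
  then have "n \<in> {-2..2}"
    using power2_le_iff_abs_le[of 2 n] by (simp add: abs_le_iff)
  then have "n = -2 \<or> n = -1 \<or> n = 0 \<or> n = 1 \<or> n = 2"
    by auto
  then consider "4 - n\<^sup>2 = 0" | "4 - n\<^sup>2 \<in> {3, 4}"
    by auto
  then show ?thesis
  proof cases
    case 1
    then have "t = 0"
      using qt \<open>q \<noteq> 0\<close> by simp
    then show ?thesis
      by simp
  next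
    case 2
    then have "int q = 4 - n\<^sup>2"
      using square_eq_mult_discriminant[OF q] c2 by simp
    then have "of_nat q * t\<^sup>2 = of_nat q * 1"
      using qt by (metis of_int_of_nat_eq mult_1_right)
    then have "t\<^sup>2 = 1"
      using \<open>q \<noteq> 0\<close> by simp
    then show ?thesis
      by (metis Ints_1 Ints_minus power2_eq_1_iff)
  qed
qed

definition half_point :: "nat \<Rightarrow> int \<times> int \<Rightarrow> complex" where
  "half_point q = (\<lambda>(n, t). (of_int n + of_int t * sqrt_neg q) / 2)"

lemma inj_half_point:
  assumes "q > 0"
  shows "inj (half_point q)"
proof (rule injI, clarify)
  fix n t n' t'
  assume "half_point q (n, t) = half_point q (n', t')"
  then have "Re (half_point q (n, t)) = Re (half_point q (n', t'))"
    and "Im (half_point q (n, t)) = Im (half_point q (n', t'))"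
    by simp_all
  with assms show "n = n' \<and> t = t'"
    by (simp add: half_point_def)
qed

lemma half_point_mult_conj:
  "half_point q (n, t) * half_point q (n, - t) = of_int (n\<^sup>2 + int q * t\<^sup>2) / 4"
  by (simp add: half_point_def field_simps power2_eq_square of_real_sqrt_square)

lemma algebraic_integer_half_point:
  assumes "(n, t) \<in> norm_one_pairs q"
  shows "algebraic_integer (half_point q (n, t))"
proof -
  let ?z = "half_point q (n, t)"
  have "?z * ?z - of_int n * ?z + 1 = (of_int t * of_int t * (sqrt_neg q * sqrt_neg q) - of_int n * of_int n + 4) / 4"
    by (simp add: half_point_def field_simps)
  also have "\<dots> = - of_int (n\<^sup>2 + int q * t\<^sup>2 - 4) / 4"
    unfolding sqrt_neg_square by (simp add: power2_eq_square algebra_simps)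
  also have "\<dots> = 0"
    using assms by (simp add: norm_one_pairs_def)
  finally have "poly (map_poly of_int [:1, - n, 1:]) ?z = 0"
    by (simp add: map_poly_pCons algebra_simps)
  moreover have "lead_coeff [:1, - n, 1:] = 1"
    by simp
  ultimately show ?thesis
    unfolding algebraic_integer_def by blast
qed

lemma half_point_in_OK:
  assumes "p \<in> norm_one_pairs q"
  shows "half_point q p \<in> OK q"
proof -
  obtain n t where p: "p = (n, t)"
    by (cases p)
  have "half_point q p = of_real (of_rat (of_int n / 2)) + of_real (of_rat (of_int t / 2)) * sqrt_neg q"
    by (simp add: p half_point_def of_rat_divide field_simps)
  then have "half_point q p \<in> Kfield q"
    unfolding Kfield_iff by blast
  then show ?thesis
    using algebraic_integer_half_point assms by (simp add: OK_def p)
qed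

lemma half_point_in_OK_units:
  assumes "(n, t) \<in> norm_one_pairs q"
  shows "half_point q (n, t) \<in> OK_units q"
proof -
  have conj: "(n, - t) \<in> norm_one_pairs q"
    using assms by (simp add: norm_one_pairs_def)
  have "half_point q (n, t) * half_point q (n, - t) = 1"
    using assms by (simp add: half_point_mult_conj norm_one_pairs_def)
  then show ?thesis
    using half_point_in_OK[OF assms] half_point_in_OK[OF conj] unfolding OK_units_def by blast
qed

lemma OK_units_eq_half_points:
  assumes q: "q \<in> {3, 4, 7, 8, 11, 19, 43, 67, 163}"
  shows "OK_units q = half_point q ` norm_one_pairs q"
proof
  show "OK_units q \<subseteq> half_point q ` norm_one_pairs q"
  proof
    fix x
    assume unit: "x \<in> OK_units q"
    have "q > 0"
      using q by auto
    obtain n t where x: "x = (of_int n + of_real (of_rat t) * sqrt_neg q) / 2"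
      and nt: "of_int (n\<^sup>2) + of_nat q * t\<^sup>2 = (4 :: rat)"
      by (rule OK_unit_half_coordinates[OF \<open>q > 0\<close> unit])
    obtain t' where t': "t = of_int t'"
      using rat_norm_one_pair_integral[OF q nt] by (rule Ints_cases)
    have "(of_int (n\<^sup>2 + int q * t'\<^sup>2) :: rat) = of_int 4"
      using nt unfolding t' by simp
    then have "(n, t') \<in> norm_one_pairs q"
      unfolding of_int_eq_iff norm_one_pairs_def by simp
    moreover have "x = half_point q (n, t')"
      by (simp add: x t' half_point_def)
    ultimately show "x \<in> half_point q ` norm_one_pairs q"
      by blast
  qed
  show "half_point q ` norm_one_pairs q \<subseteq> OK_units q"
    using half_point_in_OK_units by auto
qed

lemma card_OK_units:
  assumes "q \<in> {3, 4, 7, 8, 11, 19, 43, 67, 163}"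
  shows "finite (OK_units q)" "card (OK_units q) = card (norm_one_pairs q)"
proof -
  have "q > 0"
    using assms by auto
  then show "finite (OK_units q)" "card (OK_units q) = card (norm_one_pairs q)"
    unfolding OK_units_eq_half_points[OF assms]
    using finite_norm_one_pairs inj_half_point by (auto intro: card_image inj_on_subset)
qed

theorem lemma2p3:
  fixes q :: nat
  assumes "q \<in> {3, 4, 7, 8, 11, 19, 43, 67, 163}"
  defines "f \<equiv> (\<lambda>w. \<i> * (w - zq q) / (w - cnj (zq q)))"
  defines "\<phi> \<equiv> (\<lambda>g. complex_of_real (RR q g + 2 * (lam q)\<^sup>2) * f (act g (zq q)))"
  shows "finite (stab q)
    \<and> (\<forall>w \<in> \<phi> ` PSL2Z. card {g \<in> PSL2Z. \<phi> g = w} = card (stab q))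
    \<and> finite (OK_units q) \<and> 2 * card (stab q) = card (OK_units q)"
proof -
  have bij: "bij_betw (\<lambda>(a,b,c,d). (a + d, c)) (fixing_matrices (zq q)) (norm_one_pairs q)"
    by (rule bij_betw_fixing_matrices_zq[OF assms(1)])
  have "finite (fixing_matrices (zq q))"
    using bij_betw_finite[OF bij] finite_norm_one_pairs assms(1) by auto
  note stab = card_fixing_matrices_zq[OF this]
  have Im_z: "Im (zq q) > 0"
    using assms(1) by (auto simp: zq_def lam_def)
  have "\<phi> g = weighted_cayley (zq q) (act g (zq q))" for g
    by (simp add: \<phi>_def f_def RR_def weighted_cayley_def zq_def)
  then have "card {g \<in> PSL2Z. \<phi> g = \<phi> g0} = card (stab q)" if "g0 \<in> PSL2Z" for g0
    using card_weighted_cayley_fiber[OF Im_z that] by (simp add: stab_def)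
  then show ?thesis
    using stab card_OK_units[OF assms(1)] bij_betw_same_card[OF bij] by auto
qed

end
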